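(* There is $p_0\in(0,2/3)$ such that for every $p\in[0,p_0)$, $$\lim_{n\to\infty}\mathbf P_p\left(\xi^1_{\lceil (C_0(p)+1)\log n\rceil}\neq\emptyset\right)=0,\qquad\text{where } C_0(p)=\frac{2}{\log(2/(1+p))}.$$
   Context: Fix an integer $r\ge3$. Let $V_n=\{1,\dots,n\}$ with $rn$ even. Let $\mathbb P$ be the law of the random multigraph $G_n$ on $V_n$ obtained by giving each vertex $r$ half-edges and pairing all $rn$ half-edges uniformly at random, and $\tilde{\mathbb P}=\mathbb P(\cdot\mid G_n\text{ is simple})$, with expectation $\tilde{\mathbb E}$. Given $G_n$ and $p\in[0,1]$, the threshold-two contact process $(\xi_t)_{t\ge0}$, $\xi_t\subseteq V_n$, is the discrete-time Markov chain in which, given $\xi_t$, independently for each vertex $x$: $x\in\xi_{t+1}$ with probability $p$ if $x$ has at least two neighbors in $\xi_t$, and $x\notin\xi_{t+1}$ otherwise. Its law given $G_n$ is $P_{G_n,p}$, and $\mathbf P_p=\tilde{\mathbb E}\,P_{G_n,p}$. $\xi^1_t$ denotes the process started from $\xi_0=V_n$. *)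

theory Defs
  imports "HOL-Probability.Probability"
begin

text \<open>Configuration model: vertex set V_n = {1..n}, each vertex x carries half-edges
 (x,i) with i < r.  A pairing of all half-edges is a fixed-point-free involution of
 the half-edge set (identity outside it, so that the set of pairings is finite).\<close>

definition half_edges :: "nat \<Rightarrow> nat \<Rightarrow> (nat \<times> nat) set" where
  "half_edges r n = {1..n} \<times> {..<r}"

definition pairings :: "nat \<Rightarrow> nat \<Rightarrow> ((nat \<times> nat) \<Rightarrow> (nat \<times> nat)) set" where
  "pairings r n = {\<sigma>. (\<forall>h\<in>half_edges r n. \<sigma> h \<in> half_edges r n \<and> \<sigma> h \<noteq> h \<and> \<sigma> (\<sigma> h) = h)
                     \<and> (\<forall>h. h \<notin> half_edges r n \<longrightarrow> \<sigma> h = h)}"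

definition simple_pairing :: "nat \<Rightarrow> nat \<Rightarrow> ((nat \<times> nat) \<Rightarrow> (nat \<times> nat)) \<Rightarrow> bool" where
  "simple_pairing r n \<sigma> \<longleftrightarrow>
     (\<forall>h\<in>half_edges r n. fst (\<sigma> h) \<noteq> fst h) \<and>
     (\<forall>x\<in>{1..n}. \<forall>i<r. \<forall>j<r. fst (\<sigma> (x,i)) = fst (\<sigma> (x,j)) \<longrightarrow> i = j)"

definition simple_pairings :: "nat \<Rightarrow> nat \<Rightarrow> ((nat \<times> nat) \<Rightarrow> (nat \<times> nat)) set" where
  "simple_pairings r n = {\<sigma> \<in> pairings r n. simple_pairing r n \<sigma>}"

definition nbrs :: "nat \<Rightarrow> nat \<Rightarrow> ((nat \<times> nat) \<Rightarrow> (nat \<times> nat)) \<Rightarrow> nat \<Rightarrow> nat set" where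
  "nbrs r n \<sigma> x = {y. \<exists>i<r. x \<in> {1..n} \<and> fst (\<sigma> (x,i)) = y}"

definition tc_step :: "nat \<Rightarrow> nat \<Rightarrow> ((nat \<times> nat) \<Rightarrow> (nat \<times> nat)) \<Rightarrow> real \<Rightarrow> nat set \<Rightarrow> nat set pmf" where
  "tc_step r n \<sigma> p A =
     map_pmf (\<lambda>f. {x \<in> {1..n}. f x})
       (Pi_pmf {1..n} False
          (\<lambda>x. if card (nbrs r n \<sigma> x \<inter> A) \<ge> 2 then bernoulli_pmf p else return_pmf False))"

primrec tc_proc :: "nat \<Rightarrow> nat \<Rightarrow> ((nat \<times> nat) \<Rightarrow> (nat \<times> nat)) \<Rightarrow> real \<Rightarrow> nat \<Rightarrow> nat set pmf" where
  "tc_proc r n \<sigma> p 0 = return_pmf {1..n}"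
| "tc_proc r n \<sigma> p (Suc t) = bind_pmf (tc_proc r n \<sigma> p t) (tc_step r n \<sigma> p)"

text \<open>Annealed probability  P_p(xi^1_t \<noteq> {}) = E~ P_{G_n,p}(xi^1_t \<noteq> {}): the configuration
 model conditioned on simplicity is the uniform distribution on simple pairings.
 (If no simple pairing exists the value is 0; irrelevant for the limit.)\<close>
definition annealed_survival :: "nat \<Rightarrow> nat \<Rightarrow> real \<Rightarrow> nat \<Rightarrow> real" where
  "annealed_survival r n p t =
     (\<Sum>\<sigma>\<in>simple_pairings r n. measure_pmf.prob (tc_proc r n \<sigma> p t) {A. A \<noteq> {}})
       / real (card (simple_pairings r n))"

definition C0 :: "real \<Rightarrow> real" where
  "C0 p = 2 / ln (2 / (1 + p))"

end

theory Submission imports Defs begin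

text \<open>First-moment argument. An occupied vertex at time t+1 needs an occupied neighbour at
 time t, and a set A of vertices has at most r|A| neighbours, so the expected number of occupied
 vertices shrinks by a factor p r in each step: E|xi^1_t| \<le> n (p r)^t on every graph. For
 p < 1/(3r) we have p r \<le> e^-1, hence at any time t \<ge> c log n with c > 1 the survival
 probability is at most n^(1-c), which tends to 0. The value of C0 p only matters through c > 1.\<close>

lemma card_vertices_adjacent_le:
  assumes \<sigma>: "\<sigma> \<in> pairings r n" and A: "A \<subseteq> {1..n}"
  shows "card {x\<in>{1..n}. nbrs r n \<sigma> x \<inter> A \<noteq> {}} \<le> r * card A"
proof -
  have fin: "finite A" using A finite_subset by blast
  have "{x\<in>{1..n}. nbrs r n \<sigma> x \<inter> A \<noteq> {}} \<subseteq> (\<lambda>(y,j). fst (\<sigma> (y,j))) ` (A \<times> {..<r})"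
  proof
    fix x assume "x \<in> {x\<in>{1..n}. nbrs r n \<sigma> x \<inter> A \<noteq> {}}"
    then obtain i y where x: "x \<in> {1..n}" and i: "i < r" and y: "y \<in> A" and e: "fst (\<sigma> (x,i)) = y"
      by (auto simp: nbrs_def)
    have "(x,i) \<in> half_edges r n" using x i by (auto simp: half_edges_def)
    with \<sigma> have h: "\<sigma> (x,i) \<in> half_edges r n" "\<sigma> (\<sigma> (x,i)) = (x,i)" by (auto simp: pairings_def)
    obtain j where j: "\<sigma> (x,i) = (y,j)" "j < r" using h e by (cases "\<sigma> (x,i)") (auto simp: half_edges_def)
    have "x = fst (\<sigma> (y,j))" using h j by simp
    thus "x \<in> (\<lambda>(y,j). fst (\<sigma> (y,j))) ` (A \<times> {..<r})" using y j by force
  qed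
  hence "card {x\<in>{1..n}. nbrs r n \<sigma> x \<inter> A \<noteq> {}} \<le> card ((\<lambda>(y,j). fst (\<sigma> (y,j))) ` (A \<times> {..<r}))"
    by (intro card_mono) (auto simp: fin)
  also have "\<dots> \<le> card (A \<times> {..<r})" by (rule card_image_le) (simp add: fin)
  also have "\<dots> = r * card A" by (simp add: card_cartesian_product)
  finally show ?thesis .
qed

lemma set_pmf_tc_proc_subset: "set_pmf (tc_proc r n \<sigma> p t) \<subseteq> Pow {1..n}"
proof (induction t)
  case (Suc t)
  have "set_pmf (tc_step r n \<sigma> p A) \<subseteq> Pow {1..n}" for A by (auto simp: tc_step_def)
  thus ?case unfolding tc_proc.simps set_bind_pmf by blast
qed simp

lemma nn_integral_card_Pi_pmf:
  assumes "finite I"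
  shows "(\<integral>\<^sup>+f. ennreal (real (card {x\<in>I. f x})) \<partial>Pi_pmf I False Q)
       = (\<Sum>x\<in>I. emeasure (measure_pmf (Q x)) {True})"
proof -
  have card_as_sum: "ennreal (real (card {x\<in>I. f x})) = (\<Sum>x\<in>I. indicator {True} (f x))" for f :: "'a \<Rightarrow> bool"
  proof -
    have "(\<Sum>x\<in>I. indicator {True} (f x) :: ennreal) = of_nat (card (I \<inter> {x. f x}))"
      using assms by (simp add: indicator_def sum_of_bool_eq)
    also have "I \<inter> {x. f x} = {x\<in>I. f x}" by auto
    finally show ?thesis by (simp add: ennreal_of_nat_eq_real_of_nat)
  qed
  have "(\<integral>\<^sup>+f. ennreal (real (card {x\<in>I. f x})) \<partial>Pi_pmf I False Q)
      = (\<Sum>x\<in>I. \<integral>\<^sup>+f. indicator {True} (f x) \<partial>Pi_pmf I False Q)"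
    unfolding card_as_sum by (rule nn_integral_sum) auto
  also have "\<dots> = (\<Sum>x\<in>I. \<integral>\<^sup>+b. indicator {True} b \<partial>map_pmf (\<lambda>f. f x) (Pi_pmf I False Q))"
    by (simp only: nn_integral_map_pmf)
  also have "\<dots> = (\<Sum>x\<in>I. emeasure (measure_pmf (Q x)) {True})"
    using assms by (intro sum.cong refl) (simp add: Pi_pmf_component)
  finally show ?thesis .
qed

lemma nn_integral_card_tc_step_le:
  assumes \<sigma>: "\<sigma> \<in> pairings r n" and A: "A \<subseteq> {1..n}" and p: "0 \<le> p" "p \<le> 1"
  shows "(\<integral>\<^sup>+B. ennreal (real (card B)) \<partial>tc_step r n \<sigma> p A) \<le> ennreal (p * r * card A)"
proof -
  let ?active = "\<lambda>x. card (nbrs r n \<sigma> x \<inter> A) \<ge> 2"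
  have "(\<integral>\<^sup>+B. ennreal (real (card B)) \<partial>tc_step r n \<sigma> p A)
      = (\<Sum>x\<in>{1..n}. if ?active x then ennreal p else 0)"
    unfolding tc_step_def nn_integral_map_pmf nn_integral_card_Pi_pmf[OF finite_atLeastAtMost]
    using p by (intro sum.cong refl) (simp add: emeasure_pmf_single)
  also have "\<dots> = ennreal (p * card {x\<in>{1..n}. ?active x})"
    using p by (simp add: sum.If_cases Int_def conj_commute ennreal_mult ennreal_of_nat_eq_real_of_nat mult.commute)
  also have "\<dots> \<le> ennreal (p * card {x\<in>{1..n}. nbrs r n \<sigma> x \<inter> A \<noteq> {}})"
    using p by (intro ennreal_leI mult_left_mono) (auto intro!: card_mono)
  also have "\<dots> \<le> ennreal (p * r * card A)"
    using p card_vertices_adjacent_le[OF \<sigma> A]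
    by (intro ennreal_leI) (simp add: mult.assoc mult_left_mono flip: of_nat_mult)
  finally show ?thesis .
qed

lemma nn_integral_card_tc_proc_le:
  assumes \<sigma>: "\<sigma> \<in> pairings r n" and p: "0 \<le> p" "p \<le> 1"
  shows "(\<integral>\<^sup>+A. ennreal (real (card A)) \<partial>tc_proc r n \<sigma> p t) \<le> ennreal (real n * (p * r) ^ t)"
proof (induction t)
  case 0
  show ?case by simp
next
  case (Suc t)
  have "(\<integral>\<^sup>+A. ennreal (real (card A)) \<partial>tc_proc r n \<sigma> p (Suc t))
      = (\<integral>\<^sup>+A. (\<integral>\<^sup>+B. ennreal (real (card B)) \<partial>tc_step r n \<sigma> p A) \<partial>tc_proc r n \<sigma> p t)"
    by simp
  also have "\<dots> \<le> (\<integral>\<^sup>+A. ennreal (p * r) * ennreal (real (card A)) \<partial>tc_proc r n \<sigma> p t)"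
  proof (intro nn_integral_mono_AE AE_pmfI)
    fix A assume "A \<in> set_pmf (tc_proc r n \<sigma> p t)"
    hence "A \<subseteq> {1..n}" using set_pmf_tc_proc_subset by blast
    thus "(\<integral>\<^sup>+B. ennreal (real (card B)) \<partial>tc_step r n \<sigma> p A) \<le> ennreal (p * r) * ennreal (real (card A))"
      using nn_integral_card_tc_step_le[OF \<sigma> _ p] p by (simp add: ennreal_mult)
  qed
  also have "\<dots> = ennreal (p * r) * (\<integral>\<^sup>+A. ennreal (real (card A)) \<partial>tc_proc r n \<sigma> p t)"
    by (rule nn_integral_cmult) auto
  also have "\<dots> \<le> ennreal (p * r) * ennreal (real n * (p * r) ^ t)"
    by (intro mult_left_mono Suc) auto
  also have "\<dots> = ennreal (real n * (p * r) ^ Suc t)"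
    using p by (simp add: ennreal_mult[symmetric] algebra_simps)
  finally show ?case .
qed

lemma prob_tc_proc_nonempty_le:
  assumes \<sigma>: "\<sigma> \<in> pairings r n" and p: "0 \<le> p" "p \<le> 1"
  shows "measure_pmf.prob (tc_proc r n \<sigma> p t) {A. A \<noteq> {}} \<le> real n * (p * r) ^ t"
proof -
  have "ennreal (measure_pmf.prob (tc_proc r n \<sigma> p t) {A. A \<noteq> {}})
      = emeasure (measure_pmf (tc_proc r n \<sigma> p t)) {A. A \<noteq> {}}"
    by (simp add: measure_pmf.emeasure_eq_measure)
  also have "\<dots> = (\<integral>\<^sup>+A. indicator {A. A \<noteq> {}} A \<partial>tc_proc r n \<sigma> p t)"
    by simp
  also have "\<dots> \<le> (\<integral>\<^sup>+A. ennreal (real (card A)) \<partial>tc_proc r n \<sigma> p t)"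
  proof (intro nn_integral_mono_AE AE_pmfI)
    fix A assume "A \<in> set_pmf (tc_proc r n \<sigma> p t)"
    hence "A \<subseteq> {1..n}" using set_pmf_tc_proc_subset by blast
    hence "finite A" by (rule finite_subset) simp
    thus "indicator {A. A \<noteq> {}} A \<le> ennreal (real (card A))"
      by (cases "A = {}") (auto simp: indicator_def Suc_le_eq card_gt_0_iff)
  qed
  also have "\<dots> \<le> ennreal (real n * (p * r) ^ t)" by (rule nn_integral_card_tc_proc_le[OF \<sigma> p])
  finally show ?thesis using p by (simp add: ennreal_le_iff)
qed

lemma annealed_survival_nonneg: "0 \<le> annealed_survival r n p t"
  unfolding annealed_survival_def by (intro divide_nonneg_nonneg sum_nonneg) auto

lemma annealed_survival_le:
  assumes p: "0 \<le> p" "p \<le> 1"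
  shows "annealed_survival r n p t \<le> real n * (p * r) ^ t"
proof (cases "card (simple_pairings r n) = 0")
  case True thus ?thesis using p by (simp add: annealed_survival_def)
next
  case False
  have "(\<Sum>\<sigma>\<in>simple_pairings r n. measure_pmf.prob (tc_proc r n \<sigma> p t) {A. A \<noteq> {}})
      \<le> card (simple_pairings r n) * (real n * (p * r) ^ t)"
    by (rule sum_bounded_above) (use prob_tc_proc_nonempty_le p in \<open>auto simp: simple_pairings_def\<close>)
  thus ?thesis using False unfolding annealed_survival_def by (simp add: divide_le_eq mult.commute)
qed

lemma C0_pos: "0 \<le> p \<Longrightarrow> p < 1 \<Longrightarrow> 0 < C0 p"
  unfolding C0_def by (intro divide_pos_pos ln_gt_zero) (simp_all add: field_simps)

lemma real_mult_power_log_time_tendsto_zero: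
  fixes q c :: real
  assumes q: "0 \<le> q" "q \<le> exp (-1)" and c: "c > 1"
  shows "((\<lambda>n. real n * q ^ nat \<lceil>c * ln (real n)\<rceil>) \<longlongrightarrow> 0) sequentially"
proof (rule tendsto_sandwich[where f = "\<lambda>_. 0" and h = "\<lambda>n. real n powr (1 - c)"])
  have bound: "real n * q ^ nat \<lceil>c * ln (real n)\<rceil> \<le> real n powr (1 - c)" if n: "n \<ge> 1" for n :: nat
  proof -
    define t where "t = nat \<lceil>c * ln (real n)\<rceil>"
    have "c * ln (real n) \<le> real t" unfolding t_def using c n by linarith
    have "q ^ t \<le> exp (-1) ^ t" by (intro power_mono q)
    also have "\<dots> = exp (- real t)" by (simp flip: exp_of_nat_mult)
    also have "\<dots> \<le> exp (- (c * ln (real n)))" using \<open>c * ln (real n) \<le> real t\<close> by simp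
    also have "\<dots> = real n powr (- c)" using n by (simp add: powr_def)
    finally have "real n * q ^ t \<le> real n * real n powr (- c)" by (simp add: mult_left_mono)
    also have "\<dots> = real n powr (1 - c)" using n by (simp add: powr_diff powr_minus field_simps)
    finally show ?thesis by (simp add: t_def)
  qed
  show "\<forall>\<^sub>F n in sequentially. real n * q ^ nat \<lceil>c * ln (real n)\<rceil> \<le> real n powr (1 - c)"
    by (rule eventually_sequentiallyI[of 1]) (rule bound)
  show "\<forall>\<^sub>F n in sequentially. 0 \<le> real n * q ^ nat \<lceil>c * ln (real n)\<rceil>" using q by simp
  show "((\<lambda>n. real n powr (1 - c)) \<longlongrightarrow> 0) sequentially"
    using c by (intro tendsto_neg_powr filterlim_real_sequentially) auto
qed simp

theorem corollary1:
  fixes r :: nat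
  assumes "r \<ge> 3"
  shows "\<exists>p0::real. 0 < p0 \<and> p0 < 2/3 \<and>
           (\<forall>p. 0 \<le> p \<and> p < p0 \<longrightarrow>
              ((\<lambda>n. annealed_survival r n p (nat \<lceil>(C0 p + 1) * ln (real n)\<rceil>)) \<longlongrightarrow> 0)
                (inf sequentially (principal {n. even (r * n)})))"
proof (intro exI conjI allI impI)
  show "0 < 1 / (3 * real r)" "1 / (3 * real r) < 2/3" using assms by (simp_all add: field_simps)
  fix p :: real assume "0 \<le> p \<and> p < 1 / (3 * real r)"
  hence p: "0 \<le> p" "p * r < 1/3" using assms by (auto simp: field_simps)
  have "p < 1" using p assms mult_left_mono[of 3 "real r" p] by linarith
  have "1/3 \<le> exp (-1::real)" using exp_le by (simp add: exp_minus field_simps)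
  hence "p * r \<le> exp (-1)" using p by linarith
  with p have "((\<lambda>n. real n * (p * r) ^ nat \<lceil>(C0 p + 1) * ln (real n)\<rceil>) \<longlongrightarrow> 0) sequentially"
    using C0_pos[OF p(1) \<open>p < 1\<close>] by (intro real_mult_power_log_time_tendsto_zero) auto
  hence "((\<lambda>n. annealed_survival r n p (nat \<lceil>(C0 p + 1) * ln (real n)\<rceil>)) \<longlongrightarrow> 0) sequentially"
    by (rule tendsto_sandwich[OF _ _ tendsto_const, rotated 2])
       (use annealed_survival_le p(1) \<open>p < 1\<close> in \<open>auto intro!: always_eventually annealed_survival_nonneg\<close>)
  thus "((\<lambda>n. annealed_survival r n p (nat \<lceil>(C0 p + 1) * ln (real n)\<rceil>)) \<longlongrightarrow> 0)
          (inf sequentially (principal {n. even (r * n)}))"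
    by (rule tendsto_mono[rotated]) simp
qed

end
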